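(* Let $\zeta_1\in\mathbb{C}_+$, $\bar\zeta_1\in\mathbb{C}_-$ and $\omega_1,\bar\omega_1\in\{1,-1\}$. Then: (a) the function $$q(x,t)=2i(\bar\zeta_1-\zeta_1)\frac{\bar\omega_1e^{-2i\bar\zeta_1x-4i\bar\zeta_1^2t}}{1+\omega_1\bar\omega_1e^{-2i(\bar\zeta_1-\zeta_1)x-4i(\bar\zeta_1^2-\zeta_1^2)t}}$$ satisfies the reverse-space-time NLS equation $iq_t(x,t)+q_{xx}(x,t)+2q^2(x,t)q(-x,-t)=0$ wherever the denominator is nonzero; (b) with $V=-2\,\mathrm{Im}(\bar\zeta_1^2-\zeta_1^2)/\mathrm{Im}(\bar\zeta_1-\zeta_1)$, $\beta=2V\,\mathrm{Im}(\bar\zeta_1)+4\,\mathrm{Im}(\bar\zeta_1^2)$ and $\gamma=-2V\,\mathrm{Re}(\bar\zeta_1-\zeta_1)-4\,\mathrm{Re}(\bar\zeta_1^2-\zeta_1^2)$, one has along the line $x=Vt$ $$|q(Vt,t)|=\frac{2|\bar\zeta_1-\zeta_1|\,e^{\beta t}}{\left|1+\omega_1\bar\omega_1e^{i\gamma t}\right|},$$ and $\gamma=4|\zeta_1-\bar\zeta_1|^2\,\mathrm{Im}(\zeta_1+\bar\zeta_1)/\mathrm{Im}(\bar\zeta_1-\zeta_1)$. In particular, if $\mathrm{Im}(\zeta_1+\bar\zeta_1)\neq0$ then $q$ becomes singular (its denominator vanishes) along $x=Vt$ periodically in $t$ with period $2\pi/|\gamma|$.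
   Context: $\mathbb{C}_\pm$ denote the open upper/lower half planes; $\mathrm{Re},\mathrm{Im}$ denote real and imaginary parts. *)

theory Defs
  imports "HOL-Analysis.Analysis"
begin

definition soliton_den :: "complex \<Rightarrow> complex \<Rightarrow> complex \<Rightarrow> complex \<Rightarrow> real \<Rightarrow> real \<Rightarrow> complex" where
  "soliton_den z zb w wb x t =
     1 + w * wb * exp (- 2 * \<i> * (zb - z) * of_real x - 4 * \<i> * (zb\<^sup>2 - z\<^sup>2) * of_real t)"

definition soliton_q :: "complex \<Rightarrow> complex \<Rightarrow> complex \<Rightarrow> complex \<Rightarrow> real \<Rightarrow> real \<Rightarrow> complex" where
  "soliton_q z zb w wb x t =
     2 * \<i> * (zb - z) * (wb * exp (- 2 * \<i> * zb * of_real x - 4 * \<i> * zb\<^sup>2 * of_real t))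
       / soliton_den z zb w wb x t"

end

theory Submission
  imports Defs
begin

text \<open>Write q = K exp A / (1 + c exp R) with A, R complex-linear in (x, t), c = w wb = \<plusminus>1
  and K^2 = -4 (zb - z)^2. Derivatives of such a quotient are again quotients of exponentials
  over powers of 1 + c exp R, and reversing (x, t) negates A and R; because c^2 = 1 this gives
  q (-x) (-t) = K c exp (R - A) / (1 + c exp R), so the NLS equation reduces to a polynomial
  identity in exp R. The velocity V makes R purely imaginary on the line x = V t, where the
  denominator becomes 1 + c exp (i \<gamma> t); it vanishes exactly when \<gamma> t lies in one residue
  class modulo 2 pi.\<close>

lemma has_vector_derivative_exp_ratio:
  fixes K p p0 c r r0 :: complex and y :: real
  assumes "1 + c * exp (r * y + r0) \<noteq> 0"
  shows "((\<lambda>y::real. K * exp (p * y + p0) / (1 + c * exp (r * y + r0))) has_vector_derivative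
           K * exp (p * y + p0) * (p + c * (p - r) * exp (r * y + r0))
             / (1 + c * exp (r * y + r0))^2) (at y)"
proof -
  have "((\<lambda>u. K * exp (p * u + p0) / (1 + c * exp (r * u + r0))) has_field_derivative
           K * exp (p * y + p0) * (p + c * (p - r) * exp (r * y + r0))
             / (1 + c * exp (r * y + r0))^2) (at (of_real y))"
    by (rule derivative_eq_intros refl assms | simp add: power2_eq_square algebra_simps)+
  then show ?thesis by (rule has_vector_derivative_real_field)
qed

lemma has_vector_derivative_exp_ratio_deriv:
  fixes K p p0 c r r0 :: complex and y :: real
  assumes "1 + c * exp (r * y + r0) \<noteq> 0"
  shows "((\<lambda>y::real. K * exp (p * y + p0) * (p + c * (p - r) * exp (r * y + r0))
             / (1 + c * exp (r * y + r0))^2) has_vector_derivative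
           K * exp (p * y + p0) * (p^2 + c * (2 * p^2 - 2 * p * r - r^2) * exp (r * y + r0)
             + c^2 * (p - r)^2 * exp (r * y + r0)^2) / (1 + c * exp (r * y + r0)) ^ 3) (at y)"
proof -
  have "((\<lambda>u. K * exp (p * u + p0) * (p + c * (p - r) * exp (r * u + r0))
             / (1 + c * exp (r * u + r0))^2) has_field_derivative
           K * exp (p * y + p0) * (p^2 + c * (2 * p^2 - 2 * p * r - r^2) * exp (r * y + r0)
             + c^2 * (p - r)^2 * exp (r * y + r0)^2) / (1 + c * exp (r * y + r0)) ^ 3) (at (of_real y))"
    apply (rule derivative_eq_intros refl)+
    using assms apply simp
    using assms apply (simp add: divide_simps)
    apply algebra
    done
  then show ?thesis by (rule has_vector_derivative_real_field)
qed

lemma has_vector_derivative_exp_ratio_second: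
  fixes K p p0 c r r0 :: complex and y :: real
  assumes "1 + c * exp (r * y + r0) \<noteq> 0"
  shows "((\<lambda>y. vector_derivative (\<lambda>u::real. K * exp (p * u + p0) / (1 + c * exp (r * u + r0))) (at y))
           has_vector_derivative
           K * exp (p * y + p0) * (p^2 + c * (2 * p^2 - 2 * p * r - r^2) * exp (r * y + r0)
             + c^2 * (p - r)^2 * exp (r * y + r0)^2) / (1 + c * exp (r * y + r0)) ^ 3) (at y)"
proof -
  let ?S = "{u::real. 1 + c * exp (r * u + r0) \<noteq> 0}"
  have "open ?S"
    by (rule open_Collect_neq) (auto intro!: continuous_intros)
  moreover have "y \<in> ?S" using assms by simp
  moreover have "K * exp (p * u + p0) * (p + c * (p - r) * exp (r * u + r0)) / (1 + c * exp (r * u + r0))^2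
      = vector_derivative (\<lambda>u::real. K * exp (p * u + p0) / (1 + c * exp (r * u + r0))) (at u)"
    if "u \<in> ?S" for u
    using that by (intro vector_derivative_at[symmetric] has_vector_derivative_exp_ratio) simp
  ultimately show ?thesis
    by (rule has_vector_derivative_transform_within_open[OF has_vector_derivative_exp_ratio_deriv[OF assms]])
qed

lemma nls_exp_ratio_identity:
  fixes a b c K E R :: complex
  assumes c: "c^2 = 1" and K: "K^2 = - 4 * (a - b)^2"
    and E: "E \<noteq> 0" and R: "R \<noteq> 0" and D: "1 + c * R \<noteq> 0"
  defines "pt \<equiv> - 4 * \<i> * a^2" and "rt \<equiv> - 4 * \<i> * (a^2 - b^2)"
    and "px \<equiv> - 2 * \<i> * a" and "rx \<equiv> - 2 * \<i> * (a - b)"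
  shows "\<i> * (K * E * (pt + c * (pt - rt) * R) / (1 + c * R)^2)
     + K * E * (px^2 + c * (2 * px^2 - 2 * px * rx - rx^2) * R + c^2 * (px - rx)^2 * R^2) / (1 + c * R) ^ 3
     + 2 * (K * E / (1 + c * R))^2 * (K * inverse E / (1 + c * inverse R)) = 0"
proof -
  have reflected: "K * inverse E / (1 + c * inverse R) = K * c * R / (E * (1 + c * R))"
  proof -
    have "c \<noteq> 0" and inv_c: "inverse c = c" using c by (auto simp: power2_eq_square inverse_unique)
    have "1 + c * inverse R = c * inverse R * (1 + c * R)"
      using R c by (simp add: field_simps power2_eq_square)
    then have "K * inverse E / (1 + c * inverse R) = K * inverse c * R / (E * (1 + c * R))"
      using \<open>c \<noteq> 0\<close> E R D by (simp add: field_simps)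
    then show ?thesis by (simp add: inv_c)
  qed
  have common_denominator: "\<i> * (K * E * A / Q^2) + K * E * B / Q ^ 3
      + 2 * (K * E / Q)^2 * (K * c * R / (E * Q))
      = K * E * (\<i> * A * Q + B + 2 * K^2 * c * R) / Q ^ 3" if "Q \<noteq> 0" for A B Q
    using E that by (simp add: field_simps power2_eq_square power3_eq_cube)
  have "\<i> * (pt + c * (pt - rt) * R) * (1 + c * R)
      + (px^2 + c * (2 * px^2 - 2 * px * rx - rx^2) * R + c^2 * (px - rx)^2 * R^2) + 2 * K^2 * c * R = 0"
    unfolding K pt_def rt_def px_def rx_def using c by (simp add: algebra_simps power2_eq_square)
  then show ?thesis
    unfolding reflected common_denominator[OF D] by simp
qed

lemma soliton_q_solves_reverse_space_time_nls:
  fixes z zb w wb :: complex and x t :: real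
  assumes w: "w \<in> {1, -1}" and wb: "wb \<in> {1, -1}" and den: "soliton_den z zb w wb x t \<noteq> 0"
  defines "q \<equiv> soliton_q z zb w wb"
  shows "(\<lambda>s. q x s) differentiable (at t) \<and>
        (\<lambda>y. q y t) differentiable (at x) \<and>
        (\<lambda>y. vector_derivative (\<lambda>u. q u t) (at y)) differentiable (at x) \<and>
        \<i> * vector_derivative (\<lambda>s. q x s) (at t)
          + vector_derivative (\<lambda>y. vector_derivative (\<lambda>u. q u t) (at y)) (at x)
          + 2 * (q x t)\<^sup>2 * q (- x) (- t) = 0"
proof -
  define c where "c = w * wb"
  define K where "K = 2 * \<i> * (zb - z) * wb"
  define pt where "pt = - 4 * \<i> * zb\<^sup>2"
  define rt where "rt = - 4 * \<i> * (zb\<^sup>2 - z\<^sup>2)"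
  define px where "px = - 2 * \<i> * zb"
  define rx where "rx = - 2 * \<i> * (zb - z)"
  have q_eq: "q y s = K * exp (px * y + pt * s) / (1 + c * exp (rx * y + rt * s))" for y s
    by (simp add: q_def soliton_q_def soliton_den_def c_def K_def pt_def rt_def px_def rx_def
        algebra_simps)
  have q_t: "(\<lambda>s. q x s) = (\<lambda>s. K * exp (pt * s + px * x) / (1 + c * exp (rt * s + rx * x)))"
    and q_x: "(\<lambda>y. q y t) = (\<lambda>y. K * exp (px * y + pt * t) / (1 + c * exp (rx * y + rt * t)))"
    by (simp_all add: q_eq add.commute)
  have den_x: "1 + c * exp (rx * x + rt * t) \<noteq> 0" and den_t: "1 + c * exp (rt * t + rx * x) \<noteq> 0"
    using den by (simp_all add: soliton_den_def c_def rx_def rt_def algebra_simps)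
  have q_reflect: "q (- x) (- t) = K * inverse (exp (px * x + pt * t)) / (1 + c * inverse (exp (rx * x + rt * t)))"
    by (simp add: q_eq exp_minus[symmetric])
  note d_t = has_vector_derivative_exp_ratio[OF den_t, of K pt "px * x", folded q_t]
  note d_x = has_vector_derivative_exp_ratio[OF den_x, of K px "pt * t", folded q_x]
  note d_xx = has_vector_derivative_exp_ratio_second[OF den_x, of K px "pt * t", folded q_x]
  have "c\<^sup>2 = 1" using w wb by (auto simp: c_def)
  moreover have "K\<^sup>2 = - 4 * (zb - z)\<^sup>2" using wb by (auto simp: K_def power_mult_distrib)
  ultimately have nls: "\<i> * vector_derivative (\<lambda>s. q x s) (at t)
          + vector_derivative (\<lambda>y. vector_derivative (\<lambda>u. q u t) (at y)) (at x)
          + 2 * (q x t)\<^sup>2 * q (- x) (- t) = 0"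
    using nls_exp_ratio_identity[where a = zb and b = z and E = "exp (px * x + pt * t)",
        OF _ _ exp_not_eq_zero exp_not_eq_zero den_x, folded pt_def rt_def px_def rx_def]
    unfolding vector_derivative_at[OF d_t] vector_derivative_at[OF d_xx] q_reflect
    by (simp add: q_eq add.commute)
  show ?thesis
    using d_t d_x d_xx nls by (auto intro: differentiableI_vector)
qed

lemma soliton_den_on_line:
  fixes z zb w wb :: complex and t :: real
  assumes "Im (zb - z) \<noteq> 0"
  defines "V \<equiv> - 2 * Im (zb\<^sup>2 - z\<^sup>2) / Im (zb - z)"
  defines "\<gamma> \<equiv> - 2 * V * Re (zb - z) - 4 * Re (zb\<^sup>2 - z\<^sup>2)"
  shows "soliton_den z zb w wb (V * t) t = 1 + w * wb * exp (\<i> * of_real (\<gamma> * t))"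
proof -
  have "- 2 * \<i> * (zb - z) * of_real (V * t) - 4 * \<i> * (zb\<^sup>2 - z\<^sup>2) * of_real t
      = \<i> * of_real (\<gamma> * t)"
    using assms(1) by (simp add: V_def \<gamma>_def complex_eq_iff field_simps)
  then show ?thesis by (simp add: soliton_den_def)
qed

lemma norm_soliton_q_on_line:
  fixes z zb w wb :: complex and t :: real
  assumes "Im (zb - z) \<noteq> 0" and "wb \<in> {1, -1}"
  defines "V \<equiv> - 2 * Im (zb\<^sup>2 - z\<^sup>2) / Im (zb - z)"
  defines "\<beta> \<equiv> 2 * V * Im zb + 4 * Im (zb\<^sup>2)"
    and "\<gamma> \<equiv> - 2 * V * Re (zb - z) - 4 * Re (zb\<^sup>2 - z\<^sup>2)"
  shows "cmod (soliton_q z zb w wb (V * t) t)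
    = 2 * cmod (zb - z) * exp (\<beta> * t) / cmod (1 + w * wb * exp (\<i> * of_real (\<gamma> * t)))"
proof -
  have "cmod (2 * \<i> * (zb - z) * wb) = 2 * cmod (zb - z)"
    using assms(2) by (auto simp: norm_mult)
  moreover have "Re (- 2 * \<i> * zb * of_real (V * t) - 4 * \<i> * zb\<^sup>2 * of_real t) = \<beta> * t"
    by (simp add: \<beta>_def algebra_simps)
  ultimately show ?thesis
    using soliton_den_on_line[OF assms(1), of w wb t, folded V_def, folded \<gamma>_def]
    by (simp add: soliton_q_def norm_divide norm_mult norm_exp_eq_Re)
qed

lemma soliton_phase_rate_eq:
  fixes z zb :: complex
  assumes "Im (zb - z) \<noteq> 0"
  defines "V \<equiv> - 2 * Im (zb\<^sup>2 - z\<^sup>2) / Im (zb - z)"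
  shows "- 2 * V * Re (zb - z) - 4 * Re (zb\<^sup>2 - z\<^sup>2) = 4 * (cmod (z - zb))\<^sup>2 * Im (z + zb) / Im (zb - z)"
proof -
  have factor: "zb\<^sup>2 - z\<^sup>2 = (zb - z) * (zb + z)" by (simp add: power2_eq_square algebra_simps)
  have norm_sq: "(cmod (z - zb))\<^sup>2 = Re (zb - z) ^ 2 + Im (zb - z) ^ 2"
    unfolding cmod_power2 by (simp add: power2_eq_square algebra_simps)
  show ?thesis
    unfolding V_def factor norm_sq using assms(1) by (simp add: field_simps power2_eq_square)
qed

lemma int_multiple_solutions_eq_lattice:
  fixes g \<theta> :: real
  assumes "g \<noteq> 0"
  shows "{t. \<exists>n::int. g * t = \<theta> + 2 * of_int n * pi} = {\<theta> / g + of_int k * (2 * pi / \<bar>g\<bar>) | k. True}"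
proof -
  define s :: int where "s = (if g > 0 then 1 else - 1)"
  have "g * t = \<theta> + 2 * of_int n * pi \<longleftrightarrow> t = \<theta> / g + of_int (s * n) * (2 * pi / \<bar>g\<bar>)" for t n
    using assms by (cases "g > 0") (auto simp: s_def field_simps)
  then have "{t. \<exists>n::int. g * t = \<theta> + 2 * of_int n * pi} = {\<theta> / g + of_int (s * n) * (2 * pi / \<bar>g\<bar>) | n. True}"
    by auto
  also have "\<dots> = {\<theta> / g + of_int k * (2 * pi / \<bar>g\<bar>) | k. True}"
  proof (intro set_eqI iffI)
    fix t assume "t \<in> {\<theta> / g + of_int k * (2 * pi / \<bar>g\<bar>) | k. True}"
    then obtain k where t: "t = \<theta> / g + of_int k * (2 * pi / \<bar>g\<bar>)" by blast
    have "s * (s * k) = k" by (simp add: s_def)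
    then have "t = \<theta> / g + of_int (s * (s * k)) * (2 * pi / \<bar>g\<bar>)" by (simp only: t)
    then show "t \<in> {\<theta> / g + of_int (s * n) * (2 * pi / \<bar>g\<bar>) | n. True}" by blast
  qed blast
  finally show ?thesis .
qed

lemma zeros_one_plus_sign_exp_periodic:
  fixes c :: complex and g :: real
  assumes c: "c \<in> {1, -1}" and "g \<noteq> 0"
  shows "\<exists>t0. {t. 1 + c * exp (\<i> * of_real (g * t)) = 0} = {t0 + of_int k * (2 * pi / \<bar>g\<bar>) | k. True}"
proof -
  define \<theta> where "\<theta> = (if c = 1 then pi else 0)"
  have minus_c: "- c = exp (\<i> * of_real \<theta>)" using c by (auto simp: \<theta>_def)
  have "1 + c * exp (\<i> * of_real (g * t)) = 0 \<longleftrightarrow> exp (\<i> * of_real (g * t)) = exp (\<i> * of_real \<theta>)" for t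
    using c by (auto simp: minus_c[symmetric] add_eq_0_iff)
  also have "\<dots> t \<longleftrightarrow> (\<exists>n::int. \<i> * of_real (g * t) = \<i> * of_real \<theta> + of_int (2 * n) * pi * \<i>)" for t
    by (rule exp_eq)
  also have "\<dots> t \<longleftrightarrow> (\<exists>n::int. g * t = \<theta> + 2 * of_int n * pi)" for t
    by (simp add: complex_eq_iff)
  finally have "{t. 1 + c * exp (\<i> * of_real (g * t)) = 0} = {t. \<exists>n::int. g * t = \<theta> + 2 * of_int n * pi}"
    by simp
  also have "\<dots> = {\<theta> / g + of_int k * (2 * pi / \<bar>g\<bar>) | k. True}"
    by (rule int_multiple_solutions_eq_lattice[OF assms(2)])
  finally show ?thesis by (rule exI)
qed

theorem mainTheorem5:
  fixes z zb w wb :: complex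
  assumes hz: "Im z > 0" and hzb: "Im zb < 0"
    and hw: "w \<in> {1, -1}" and hwb: "wb \<in> {1, -1}"
  defines "q \<equiv> soliton_q z zb w wb"
    and "D \<equiv> soliton_den z zb w wb"
    and "V \<equiv> - 2 * Im (zb\<^sup>2 - z\<^sup>2) / Im (zb - z)"
  defines "\<beta> \<equiv> 2 * V * Im zb + 4 * Im (zb\<^sup>2)"
    and "\<gamma> \<equiv> - 2 * V * Re (zb - z) - 4 * Re (zb\<^sup>2 - z\<^sup>2)"
  shows
    "(\<forall>x t. D x t \<noteq> 0 \<longrightarrow>
        (\<lambda>s. q x s) differentiable (at t) \<and>
        (\<lambda>y. q y t) differentiable (at x) \<and>
        (\<lambda>y. vector_derivative (\<lambda>u. q u t) (at y)) differentiable (at x) \<and>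
        \<i> * vector_derivative (\<lambda>s. q x s) (at t)
          + vector_derivative (\<lambda>y. vector_derivative (\<lambda>u. q u t) (at y)) (at x)
          + 2 * (q x t)\<^sup>2 * q (- x) (- t) = 0)
     \<and> (\<forall>t. cmod (q (V * t) t) =
          2 * cmod (zb - z) * exp (\<beta> * t) / cmod (1 + w * wb * exp (\<i> * of_real (\<gamma> * t))))
     \<and> \<gamma> = 4 * (cmod (z - zb))\<^sup>2 * Im (z + zb) / Im (zb - z)
     \<and> (Im (z + zb) \<noteq> 0 \<longrightarrow> \<gamma> \<noteq> 0 \<and>
          (\<exists>t0. {t. D (V * t) t = 0} = {t0 + of_int k * (2 * pi / \<bar>\<gamma>\<bar>) | k. True}))"
proof -
  have Im_ne: "Im (zb - z) \<noteq> 0" using hz hzb by simp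
  have den_on_line: "D (V * t) t = 1 + w * wb * exp (\<i> * of_real (\<gamma> * t))" for t
    unfolding D_def V_def \<gamma>_def by (rule soliton_den_on_line[OF Im_ne])
  have \<gamma>_eq: "\<gamma> = 4 * (cmod (z - zb))\<^sup>2 * Im (z + zb) / Im (zb - z)"
    unfolding \<gamma>_def V_def by (rule soliton_phase_rate_eq[OF Im_ne])
  have singular: "\<gamma> \<noteq> 0 \<and> (\<exists>t0. {t. D (V * t) t = 0} = {t0 + of_int k * (2 * pi / \<bar>\<gamma>\<bar>) | k. True})"
    if "Im (z + zb) \<noteq> 0"
  proof
    have "z \<noteq> zb" using Im_ne by auto
    then show "\<gamma> \<noteq> 0" using that Im_ne by (simp add: \<gamma>_eq)
    moreover have "w * wb \<in> {1, -1}" using hw hwb by auto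
    ultimately show "\<exists>t0. {t. D (V * t) t = 0} = {t0 + of_int k * (2 * pi / \<bar>\<gamma>\<bar>) | k. True}"
      unfolding den_on_line by (rule zeros_one_plus_sign_exp_periodic[rotated])
  qed
  show ?thesis
    using soliton_q_solves_reverse_space_time_nls[OF hw hwb]
      norm_soliton_q_on_line[OF Im_ne hwb, of w, folded V_def, folded \<beta>_def \<gamma>_def] \<gamma>_eq singular
    unfolding q_def D_def by blast
qed

end
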